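(* For every $s\in\mathbb{C}$ with $\Re(s)>1$, $$(2^s+1)\sum_{n\ge1}\frac{t_{n-1}}{n^s}+(2^s-1)\sum_{n\ge1}\frac{t_n}{n^s}=2^s\zeta(s).$$
   Context: For $n\ge 0$, let $t_n\in\{0,1\}$ denote the sum of the binary digits of $n$ reduced modulo $2$ (so $t_0=0$; this is the Thue–Morse sequence). $\zeta(s)=\sum_{n\ge1}n^{-s}$ is the Riemann zeta function. *)

theory Defs
  imports "HOL-Analysis.Analysis"
begin

fun bin_digit_sum :: "nat \<Rightarrow> nat" where
  "bin_digit_sum n = (if n = 0 then 0 else n mod 2 + bin_digit_sum (n div 2))"

declare bin_digit_sum.simps[simp del]

definition thue_morse :: "nat \<Rightarrow> nat" where
  "thue_morse n = bin_digit_sum n mod 2"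

text \<open>Riemann zeta function on the half-plane Re s > 1, given by its Dirichlet series
  (the only region used in the statement).\<close>
definition zeta :: "complex \<Rightarrow> complex" where
  "zeta s = (\<Sum>n. 1 / (of_nat (Suc n)) powr s)"

end

theory Submission
  imports Defs
begin

text \<open>
  Split each Dirichlet series into its even and odd terms and use \<open>t\<^sub>2\<^sub>k = t\<^sub>k\<close>,
  \<open>t\<^sub>2\<^sub>k\<^sub>+\<^sub>1 = 1 - t\<^sub>k\<close>. With \<open>P = 2\<^sup>s\<close>, \<open>A = \<Sum> t\<^sub>n\<^sub>-\<^sub>1/n\<^sup>s\<close>, \<open>B = \<Sum> t\<^sub>n/n\<^sup>s\<close>
  and the odd parts \<open>O\<^sub>A = \<Sum>\<^sub>k t\<^sub>k/(2k+1)\<^sup>s\<close>, \<open>O\<^sub>1 = \<Sum>\<^sub>k 1/(2k+1)\<^sup>s\<close> this gives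
  \<open>P A = \<zeta> - A + P O\<^sub>A\<close>, \<open>P B = B + P O\<^sub>1 - P O\<^sub>A\<close> and \<open>P \<zeta> = \<zeta> + P O\<^sub>1\<close>;
  adding the first two and inserting the third yields the identity.
  Absolute convergence for \<open>Re s > 1\<close> justifies all the rearrangements.
\<close>

lemma bin_digit_sum_double: "bin_digit_sum (2 * k) = bin_digit_sum k"
  by (cases "k = 0") (simp_all add: bin_digit_sum.simps[of "2 * k"] bin_digit_sum.simps[of 0])

lemma bin_digit_sum_double_Suc: "bin_digit_sum (Suc (2 * k)) = Suc (bin_digit_sum k)"
  by (subst bin_digit_sum.simps) simp

lemma thue_morse_le_1: "thue_morse n \<le> 1"
  by (simp add: thue_morse_def)

lemma thue_morse_double: "thue_morse (2 * k) = thue_morse k"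
  by (simp add: thue_morse_def bin_digit_sum_double)

lemma thue_morse_double_Suc: "thue_morse (Suc (2 * k)) = 1 - thue_morse k"
  unfolding thue_morse_def bin_digit_sum_double_Suc by presburger

lemma of_nat_thue_morse_double_Suc:
  "(of_nat (thue_morse (Suc (2 * k))) :: 'a::ring_1) = 1 - of_nat (thue_morse k)"
  using thue_morse_le_1[of k] by (simp add: thue_morse_double_Suc of_nat_diff)

lemma Bseq_restrict:
  fixes c :: "nat \<Rightarrow> 'a::real_normed_vector"
  shows "Bseq c \<Longrightarrow> Bseq (\<lambda>n. if P n then c n else 0)"
  by (rule Bseq_eventually_mono[of _ c]) auto

lemma suminf_even_odd:
  fixes f :: "nat \<Rightarrow> 'a::banach"
  assumes "summable (\<lambda>n. norm (f n))"
  shows "suminf f = (\<Sum>k. f (2 * k)) + (\<Sum>k. f (Suc (2 * k)))"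
proof -
  define fe where "fe n = (if even n then f n else 0)" for n
  define fo where "fo n = (if odd n then f n else 0)" for n
  have "summable fe" "summable fo"
    by (rule summable_norm_cancel, rule summable_comparison_test[OF _ assms], simp add: fe_def fo_def)+
  have "suminf f = suminf (\<lambda>n. fe n + fo n)"
    by (rule arg_cong[where f = suminf]) (auto simp: fe_def fo_def)
  also have "\<dots> = suminf fe + suminf fo"
    by (intro suminf_add[symmetric] \<open>summable fe\<close> \<open>summable fo\<close>)
  also have "suminf fe = (\<Sum>k. fe (2 * k))"
    by (rule suminf_mono_reindex[symmetric]) (auto simp: fe_def strict_mono_def elim!: evenE)
  also have "suminf fo = (\<Sum>k. fo (Suc (2 * k)))"
    by (rule suminf_mono_reindex[symmetric]) (auto simp: fo_def strict_mono_def elim!: oddE)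
  finally show ?thesis
    by (simp add: fe_def fo_def)
qed

text \<open>The term for \<open>m = 0\<close> vanishes, since \<open>0 powr s = 0\<close> and \<open>x / 0 = 0\<close>;
  so the series is the usual \<open>\<Sum>\<^sub>m\<^sub>\<ge>\<^sub>1 c m / m\<^sup>s\<close> and the value \<open>c 0\<close> is irrelevant.\<close>
definition dirichlet_series :: "(nat \<Rightarrow> complex) \<Rightarrow> complex \<Rightarrow> complex" where
  "dirichlet_series c s = (\<Sum>m. c m / of_nat m powr s)"

lemma summable_norm_dirichlet_series:
  assumes "Bseq c" and "1 < Re s"
  shows "summable (\<lambda>m. norm (c m / of_nat m powr s))"
proof -
  obtain K where K: "\<And>m. norm (c m) \<le> K"
    using assms(1) by (auto simp: Bseq_def)
  have "summable (\<lambda>m. K * real m powr (- Re s))"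
    using assms(2) by (intro summable_mult) (simp add: summable_real_powr_iff)
  then show ?thesis
  proof (rule summable_comparison_test')
    fix m :: nat
    assume "m \<ge> 1"
    have "norm (c m / of_nat m powr s) = norm (c m) / real m powr Re s"
      by (simp add: norm_divide norm_powr_real_powr)
    also have "\<dots> \<le> K / real m powr Re s"
      using K[of m] by (simp add: divide_right_mono)
    also have "\<dots> = K * real m powr (- Re s)"
      using \<open>m \<ge> 1\<close> by (simp add: powr_minus_divide)
    finally show "norm (norm (c m / of_nat m powr s)) \<le> K * real m powr (- Re s)"
      by simp
  qed
qed

lemma summable_dirichlet_series:
  assumes "Bseq c" and "1 < Re s"
  shows "summable (\<lambda>m. c m / of_nat m powr s)"
  using summable_norm_dirichlet_series[OF assms] by (rule summable_norm_cancel)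

lemma dirichlet_series_cong:
  assumes "\<And>m. 0 < m \<Longrightarrow> c m = d m"
  shows "dirichlet_series c s = dirichlet_series d s"
  unfolding dirichlet_series_def
proof (rule suminf_cong)
  fix m
  show "c m / of_nat m powr s = d m / of_nat m powr s"
    by (cases "m = 0") (simp_all add: assms)
qed

lemma dirichlet_series_diff:
  assumes "Bseq c" "Bseq d" "1 < Re s"
  shows "dirichlet_series (\<lambda>m. c m - d m) s = dirichlet_series c s - dirichlet_series d s"
  unfolding dirichlet_series_def diff_divide_distrib
  by (rule suminf_diff[symmetric, OF summable_dirichlet_series summable_dirichlet_series]) (fact assms)+

lemma dirichlet_series_conv_Suc:
  assumes "Bseq c" "1 < Re s"
  shows "dirichlet_series c s = (\<Sum>n. c (Suc n) / of_nat (Suc n) powr s)"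
  using suminf_split_head[OF summable_dirichlet_series[OF assms]]
  by (simp add: dirichlet_series_def)

lemma double_of_nat_powr: "(2 * of_nat k :: complex) powr s = 2 powr s * of_nat k powr s"
  by (simp add: powr_times_real)

lemma dirichlet_series_even_odd:
  assumes "Bseq c" "1 < Re s"
  shows "dirichlet_series c s
           = dirichlet_series (\<lambda>k. c (2 * k)) s / 2 powr s
             + dirichlet_series (\<lambda>m. if odd m then c m else 0) s"
proof -
  define f where "f m = c m / of_nat m powr s" for m
  define g where "g m = (if odd m then c m else 0)" for m
  have f_even: "f (2 * k) = c (2 * k) / of_nat k powr s / 2 powr s" for k
    unfolding f_def of_nat_mult of_nat_numeral double_of_nat_powr
    by (simp add: mult.commute)
  have "Bseq g"
    unfolding g_def using assms(1) by (rule Bseq_restrict)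
  have "dirichlet_series c s = (\<Sum>k. f (2 * k)) + (\<Sum>k. f (Suc (2 * k)))"
    using suminf_even_odd[OF summable_norm_dirichlet_series[OF assms]]
    by (simp add: dirichlet_series_def f_def)
  moreover have "(\<Sum>k. f (2 * k)) = dirichlet_series (\<lambda>k. c (2 * k)) s / 2 powr s"
    using suminf_divide[OF summable_dirichlet_series[OF Bseq_subseq[OF assms(1)] assms(2)]]
    by (simp add: dirichlet_series_def f_even)
  moreover have "dirichlet_series g s = (\<Sum>k. f (Suc (2 * k)))"
    using suminf_even_odd[OF summable_norm_dirichlet_series[OF \<open>Bseq g\<close> assms(2)]]
    by (simp add: dirichlet_series_def f_def g_def)
  ultimately show ?thesis
    by (simp add: g_def[abs_def])
qed

lemma Bseq_thue_morse: "Bseq (\<lambda>m. of_nat (thue_morse (f m)) :: 'a::real_normed_algebra_1)"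
  by (rule BseqI'[of _ 1]) (use thue_morse_le_1 in \<open>simp add: norm_of_nat\<close>)

lemma dirichlet_series_thue_morse_pred:
  fixes s :: complex
  defines "t m \<equiv> of_nat (thue_morse (m - 1))"
  assumes "1 < Re s"
  shows "dirichlet_series t s
           = (dirichlet_series (\<lambda>_. 1) s - dirichlet_series t s) / 2 powr s
             + dirichlet_series (\<lambda>m. if odd m then t m else 0) s"
proof -
  have "t (2 * m) = 1 - t m" if "0 < m" for m
    using that by (auto simp: gr0_conv_Suc t_def of_nat_thue_morse_double_Suc)
  then have "dirichlet_series (\<lambda>m. t (2 * m)) s = dirichlet_series (\<lambda>m. 1 - t m) s"
    by (rule dirichlet_series_cong)
  also have "\<dots> = dirichlet_series (\<lambda>_. 1) s - dirichlet_series t s"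
    unfolding t_def by (rule dirichlet_series_diff[OF _ Bseq_thue_morse assms(2)]) simp
  finally show ?thesis
    using dirichlet_series_even_odd[of t s] unfolding t_def by (simp add: Bseq_thue_morse assms)
qed

lemma dirichlet_series_thue_morse:
  fixes s :: complex
  defines "t m \<equiv> of_nat (thue_morse m)"
  assumes "1 < Re s"
  shows "dirichlet_series t s
           = dirichlet_series t s / 2 powr s
             + dirichlet_series (\<lambda>m. if odd m then 1 else 0) s
             - dirichlet_series (\<lambda>m. if odd m then t (m - 1) else 0) s"
proof -
  have "(\<lambda>k. t (2 * k)) = t"
    by (simp add: fun_eq_iff t_def thue_morse_double)
  moreover have "(\<lambda>m. if odd m then t m else 0)
                   = (\<lambda>m. (if odd m then 1 else 0) - (if odd m then t (m - 1) else 0))"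
    by (auto simp: fun_eq_iff t_def of_nat_thue_morse_double_Suc thue_morse_double elim!: oddE)
  moreover have "dirichlet_series \<dots> s = dirichlet_series (\<lambda>m. if odd m then 1 else 0) s
                   - dirichlet_series (\<lambda>m. if odd m then t (m - 1) else 0) s"
    unfolding t_def
    by (intro dirichlet_series_diff Bseq_restrict Bseq_thue_morse assms) (simp add: Bseq_conv_Bfun)
  ultimately show ?thesis
    using dirichlet_series_even_odd[of t s] unfolding t_def
    by (simp add: Bseq_thue_morse assms add_diff_eq)
qed

theorem theorem3:
  fixes s :: complex
  assumes "Re s > 1"
  shows "(2 powr s + 1) * (\<Sum>n. of_nat (thue_morse n) / (of_nat (Suc n)) powr s)
         + (2 powr s - 1) * (\<Sum>n. of_nat (thue_morse (Suc n)) / (of_nat (Suc n)) powr s)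
         = 2 powr s * zeta s"
proof -
  define A where "A = dirichlet_series (\<lambda>m. of_nat (thue_morse (m - 1))) s"
  define B where "B = dirichlet_series (\<lambda>m. of_nat (thue_morse m)) s"
  define Z where "Z = dirichlet_series (\<lambda>_. 1) s"
  define O\<^sub>A where "O\<^sub>A = dirichlet_series (\<lambda>m. if odd m then of_nat (thue_morse (m - 1)) else 0) s"
  define O\<^sub>1 where "O\<^sub>1 = dirichlet_series (\<lambda>m. if odd m then 1 else 0) s"
  define P where "P = (2 :: complex) powr s"
  have "P \<noteq> 0"
    by (simp add: P_def)
  moreover have "A = (Z - A) / P + O\<^sub>A"
    using dirichlet_series_thue_morse_pred[OF assms] by (simp add: A_def Z_def P_def O\<^sub>A_def)
  moreover have "B = B / P + O\<^sub>1 - O\<^sub>A"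
    using dirichlet_series_thue_morse[OF assms] by (simp add: B_def P_def O\<^sub>1_def O\<^sub>A_def)
  moreover have "Z = Z / P + O\<^sub>1"
    using dirichlet_series_even_odd[of "\<lambda>_. 1" s] assms
    by (simp add: Z_def P_def O\<^sub>1_def Bseq_conv_Bfun)
  ultimately have "(P + 1) * A + (P - 1) * B = P * Z"
    by (simp add: field_simps)
  moreover have "(\<Sum>n. of_nat (thue_morse n) / (of_nat (Suc n)) powr s) = A"
    "(\<Sum>n. of_nat (thue_morse (Suc n)) / (of_nat (Suc n)) powr s) = B" "zeta s = Z"
    by (simp_all add: dirichlet_series_conv_Suc[OF _ assms] Bseq_thue_morse Bseq_conv_Bfun
        A_def B_def Z_def zeta_def)
  ultimately show ?thesis
    by (simp add: P_def)
qed

end
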